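(* For every $\delta\in(0,\delta_0]$ and every $r>0$, $$K(r)\le\Big(\frac{2}{C_1}\Big)^{2/\alpha}\frac{r^2\vee\delta^2}{\delta^2}K^{(\delta)}(r),\qquad h^{(\delta)}(r)\le h(r)\le\Big(\frac{2}{C_1}\Big)^{4/\alpha}\frac{r^2\vee\delta^2}{\delta^2}K^{(\delta)}(r),$$ and $$h^{(\delta)}(r)\le 4\Big(\frac{2}{C_1}\Big)^{4/\alpha}K^{(\delta)}(r).$$
   Context: Let $\nu:\mathbb{R}\setminus\{0\}\to[0,\infty)$ be a symmetric density of an infinite Lévy measure ($\int(x^2\wedge1)\nu(x)dx<\infty$, $\int\nu=\infty$), such that for some $\eta_4>0$, $\nu\in C^1(0,\eta_4)$, $\nu'<0$ on $(0,\eta_4)$ and $-\nu'(x)/x$ is decreasing on $(0,\eta_4)$. Let $\psi(\xi)=\int(1-\cos(\xi x))\nu(x)dx$ satisfy the weak lower scaling condition $\psi(\lambda\theta)\ge\underline{C}\lambda^\alpha\psi(\theta)$ ($\lambda\ge1,\theta\ge0$) and weak upper scaling condition $\psi(\lambda\theta)\le\overline{C}\lambda^\beta\psi(\theta)$ ($\lambda\ge1,\theta\ge1$), where $0<\alpha\le\beta<2$, $\underline{C},\overline{C}>0$. Put $C_1=\underline{C}/\pi^2$. Truncation: there is $\delta_0\in(0,1/24]$ such that for each $\delta\in(0,\delta_0]$ one fixes a function $\mu^{(\delta)}:\mathbb{R}\setminus\{0\}\to[0,\infty)$ with $\mu^{(\delta)}=\nu$ on $(0,\delta]$, $\mu^{(\delta)}(x)\in[0,\nu(x)]$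 on $(\delta,2\delta)$, $\mu^{(\delta)}=0$ on $[2\delta,\infty)$, $\mu^{(\delta)}\in C^1(0,\infty)$, $(\mu^{(\delta)})'\le0$ on $(0,\infty)$, $-(\mu^{(\delta)})'(x)/x$ nonincreasing on $(0,\infty)$, and $\mu^{(\delta)}(-x)=\mu^{(\delta)}(x)$. For $r>0$: $h(r)=\int_{\mathbb{R}}(1\wedge x^2r^{-2})\nu(x)dx$, $h^{(\delta)}(r)=\int_{\mathbb{R}}(1\wedge x^2r^{-2})\mu^{(\delta)}(x)dx$, $K(r)=\int_{|x|\le r}x^2r^{-2}\nu(x)dx$, $K^{(\delta)}(r)=\int_{|x|\le r}x^2r^{-2}\mu^{(\delta)}(x)dx$. *)

theory Defs
  imports "HOL-Analysis.Analysis"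
begin

text \<open>Densities are functions real => real; their value at 0 is irrelevant
(a Lebesgue null set). Integrals are Lebesgue (Bochner) integrals over lborel.\<close>

definition levy_psi :: "(real \<Rightarrow> real) \<Rightarrow> real \<Rightarrow> real" where
  "levy_psi \<nu> \<xi> = (LINT x|lborel. (1 - cos (\<xi> * x)) * \<nu> x)"

definition levy_h :: "(real \<Rightarrow> real) \<Rightarrow> real \<Rightarrow> real" where
  "levy_h \<nu> r = (LINT x|lborel. min 1 (x\<^sup>2 / r\<^sup>2) * \<nu> x)"

definition levy_K :: "(real \<Rightarrow> real) \<Rightarrow> real \<Rightarrow> real" where
  "levy_K \<nu> r = (LINT x:{x. \<bar>x\<bar> \<le> r}|lborel. x\<^sup>2 / r\<^sup>2 * \<nu> x)"

end

theory Submission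
  imports Defs
begin

text \<open>
  The core is the comparison \<open>h(s) \<le> (2\<pi>\<^sup>2/Cl)\<^bsup>2/\<alpha>\<^esup> K(s)\<close> for \<open>\<nu>\<close> itself.
  Averaging \<open>\<psi>\<close> over \<open>[0, 1/s]\<close> and exchanging the integrals gives
  \<open>(13/100) h(s) \<le> sup {\<psi>(t) | 0 \<le> t \<le> 1/s}\<close>, because \<open>1 - sin u / u \<ge> (13/100) min 1 u\<^sup>2\<close>.
  Lower scaling bounds this supremum by \<open>\<psi>(L/s) / (Cl L\<^sup>\<alpha>)\<close>, while
  \<open>1 - cos v \<le> min (v\<^sup>2/2) 2\<close> gives \<open>\<psi>(L/s) \<le> (L\<^sup>2/2) K(s) + 2 h(s)\<close>; with
  \<open>L\<^sup>\<alpha> = 2\<pi>\<^sup>2/Cl\<close> the two combine to \<open>h(s) \<le> L\<^sup>2 K(s)\<close>.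

  The truncated density agrees with \<open>\<nu>\<close> on \<open>[-\<delta>, \<delta>]\<close>, so for \<open>r \<ge> \<delta>\<close>
  \<open>h(r) \<le> h(\<delta>) \<le> L\<^sup>2 K(\<delta>) \<le> L\<^sup>2 (r/\<delta>)\<^sup>2 K\<^sub>\<delta>(r)\<close>; for \<open>r \<ge> 2\<delta>\<close> the truncation is
  supported in \<open>[-r, r]\<close>, where \<open>h\<^sub>\<delta> = K\<^sub>\<delta>\<close>. Finally \<open>Cl \<le> 1\<close>, needed for \<open>L \<ge> 1\<close>:
  otherwise scaling with \<open>\<lambda> = 1\<close> forces \<open>\<psi> = 0\<close>, hence \<open>\<nu> = 0\<close> a.e., contradicting
  \<open>\<integral>\<nu> = \<infinity>\<close>.
\<close>

section \<open>Elementary trigonometric bounds\<close>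

lemma sin_le_Maclaurin_5:
  fixes u :: real
  assumes "0 \<le> u"
  shows "sin u \<le> u - u^3/6 + u^5/120"
proof -
  have "\<bar>sin u - (\<Sum>m<5. sin_coeff m * u ^ m)\<bar> \<le> inverse (fact 5) * \<bar>u\<bar> ^ 5"
    by (rule Maclaurin_sin_bound)
  moreover have "(\<Sum>m<5. sin_coeff m * u ^ m) = u - u^3/6"
  proof -
    have "{..<5::nat} = {0, 1, 2, 3, 4}" by auto
    then show ?thesis by (simp add: sin_coeff_def fact_numeral)
  qed
  ultimately have "\<bar>sin u - (u - u^3/6)\<bar> \<le> u^5/120"
    using assms by (simp add: fact_numeral)
  then show ?thesis
    unfolding abs_le_iff by linarith
qed

lemma one_minus_cos_le_half_sq:
  fixes v :: real
  shows "1 - cos v \<le> v\<^sup>2 / 2"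
proof -
  have "(sin (v/2))\<^sup>2 \<le> (v/2)\<^sup>2"
    using abs_sin_x_le_abs_x[of "v/2"] by (metis abs_le_square_iff)
  then show ?thesis
    using cos_double_sin[of "v/2"] by (simp add: power_divide)
qed

lemma one_minus_cos_le_min:
  fixes t x :: real
  shows "\<bar>1 - cos (t * x)\<bar> \<le> max 2 (t\<^sup>2) * min (x\<^sup>2) 1"
proof (cases "x\<^sup>2 \<le> 1")
  case True
  have "1 - cos (t * x) \<le> t\<^sup>2 * x\<^sup>2"
    using one_minus_cos_le_half_sq[of "t * x"] zero_le_power2[of "t * x"]
    unfolding power_mult_distrib by linarith
  also have "\<dots> \<le> max 2 (t\<^sup>2) * x\<^sup>2"
    by (intro mult_right_mono) auto
  finally show ?thesis
    using True cos_le_one[of "t * x"] by simp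
next
  case False
  have "1 - cos (t * x) \<le> max 2 (t\<^sup>2)"
    using cos_ge_minus_one[of "t * x"] by (simp add: le_max_iff_disj)
  then show ?thesis
    using False cos_le_one[of "t * x"] by simp
qed

lemma Maclaurin_sin_gap_ge:
  fixes u :: real
  assumes "0 < u" "u \<le> 2"
  shows "13/100 * min 1 (u\<^sup>2) * u \<le> u^3/6 - u^5/120"
proof (cases "u \<le> 1")
  case True
  have "u\<^sup>2 \<le> 1"
    using True assms by (intro power_le_one) auto
  then have "13/100 * min 1 (u\<^sup>2) * u = 13/100 * u^3"
    by (simp add: power2_eq_square power3_eq_cube)
  moreover have "u^5 \<le> u^3"
    using True assms by (intro power_decreasing) auto
  moreover have "0 \<le> u^3"
    using assms by simp
  ultimately show ?thesis
    by linarith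
next
  case False
  have "1 \<le> u\<^sup>2"
    using False by simp
  moreover have "u\<^sup>2 \<le> 2\<^sup>2"
    using assms by (intro power_mono) auto
  ultimately have "(u\<^sup>2 - 1) * (u\<^sup>2 - 4) \<le> 0"
    by (intro mult_nonneg_nonpos) auto
  then have "u^4 \<le> 5 * u\<^sup>2 - 4"
    by (simp add: algebra_simps power2_eq_square power4_eq_xxxx)
  then have "u * u^4 \<le> u * (5 * u\<^sup>2 - 4)"
    using assms by (intro mult_left_mono) auto
  then have "u^5 \<le> 5 * u^3 - 4 * u"
    by (simp add: algebra_simps eval_nat_numeral)
  moreover have "u * 1 \<le> u * u\<^sup>2"
    using \<open>1 \<le> u\<^sup>2\<close> assms by (intro mult_left_mono) auto
  then have "u \<le> u^3"
    by (simp add: eval_nat_numeral)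
  ultimately have "13/100 * u \<le> u^3/6 - u^5/120"
    using assms by linarith
  then show ?thesis
    using False by simp
qed

text \<open>Any constant \<open>c\<close> with \<open>c \<cdot> 2\<pi>\<^sup>2 \<ge> 5/2\<close> would do in place of \<open>13/100\<close>; that inequality is
  what lets \<open>2\<pi>\<^sup>2/Cl\<close> appear in the final bounds.\<close>
lemma one_minus_sinc_ge:
  fixes u :: real
  assumes "u \<noteq> 0"
  shows "13/100 * min 1 (u\<^sup>2) \<le> 1 - sin u / u"
proof -
  have pos: "13/100 * min 1 (u\<^sup>2) \<le> 1 - sin u / u" if "0 < u" for u :: real
  proof (cases "u \<le> 2")
    case True
    then show ?thesis
      using Maclaurin_sin_gap_ge[OF that True] sin_le_Maclaurin_5[of u] that
      by (simp add: field_simps)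
  next
    case False
    then have "sin u \<le> 87/100 * u"
      using sin_le_one[of u] by linarith
    moreover have "min 1 (u\<^sup>2) = 1"
      using False by simp
    ultimately show ?thesis
      using that by (simp add: field_simps)
  qed
  show ?thesis
  proof (cases "0 < u")
    case True
    then show ?thesis by (rule pos)
  next
    case False
    then show ?thesis
      using pos[of "- u"] assms by simp
  qed
qed

lemma nn_integral_one_minus_cos_interval:
  fixes x a :: real
  assumes "x \<noteq> 0" "0 \<le> a"
  shows "(\<integral>\<^sup>+t. ennreal (1 - cos (t * x)) * indicator {0..a} t \<partial>lborel) = ennreal (a - sin (a * x) / x)"
proof -
  have "((\<lambda>t. 1 - cos (t * x)) has_integral (a - sin (a * x) / x) - (0 - sin (0 * x) / x)) {0..a}"
  proof (rule fundamental_theorem_of_calculus)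
    fix t :: real
    have "((\<lambda>t. t - sin (t * x) / x) has_real_derivative 1 - cos (t * x) * x / x) (at t)"
      by (auto intro!: derivative_eq_intros)
    then show "((\<lambda>t. t - sin (t * x) / x) has_vector_derivative 1 - cos (t * x)) (at t within {0..a})"
      using assms by (simp add: has_real_derivative_iff_has_vector_derivative[symmetric] has_field_derivative_at_within)
  qed (use assms in simp)
  then show ?thesis
    by (intro nn_integral_has_integral_lebesgue') simp_all
qed

lemma min_one_sq_div_sq:
  fixes x r :: real
  assumes "0 < r"
  shows "min 1 (x\<^sup>2 / r\<^sup>2) = (if \<bar>x\<bar> \<le> r then x\<^sup>2 / r\<^sup>2 else 1)"
  using assms abs_le_square_iff[of x r] by auto

lemma one_minus_cos_le_weights:
  fixes L s x :: real
  assumes "0 < s"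
  shows "1 - cos (L / s * x) \<le> L\<^sup>2 / 2 * (indicator {x. \<bar>x\<bar> \<le> s} x * (x\<^sup>2 / s\<^sup>2)) + 2 * min 1 (x\<^sup>2 / s\<^sup>2)"
proof (cases "\<bar>x\<bar> \<le> s")
  case True
  have "1 - cos (L / s * x) \<le> L\<^sup>2 / 2 * (x\<^sup>2 / s\<^sup>2)"
    using one_minus_cos_le_half_sq[of "L / s * x"] by (simp add: power_mult_distrib power_divide)
  moreover have "0 \<le> min 1 (x\<^sup>2 / s\<^sup>2)"
    by simp
  ultimately show ?thesis
    using True by (simp only: indicator_simps mem_Collect_eq mult_1)
next
  case False
  then show ?thesis
    using min_one_sq_div_sq[OF assms, of x] cos_ge_minus_one[of "L / s * x"] by simp
qed

section \<open>Integrals against a Levy density\<close>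

lemma levy_K_eq_integral:
  "levy_K \<rho> r = (LINT x|lborel. indicator {x. \<bar>x\<bar> \<le> r} x * (x\<^sup>2 / r\<^sup>2) * \<rho> x)"
  by (simp add: levy_K_def set_lebesgue_integral_def mult.assoc)

locale levy_density =
  fixes \<rho> :: "real \<Rightarrow> real"
  assumes borel_measurable_density [measurable]: "\<rho> \<in> borel_measurable borel"
    and AE_density_nonneg: "AE x in lborel. 0 \<le> \<rho> x"
    and integrable_levy: "integrable lborel (\<lambda>x. min (x\<^sup>2) 1 * \<rho> x)"
begin

lemma integrable_weighted:
  assumes "w \<in> borel_measurable borel" and "\<And>x. \<bar>w x\<bar> \<le> C * min (x\<^sup>2) 1"
  shows "integrable lborel (\<lambda>x. w x * \<rho> x)"
proof (rule Bochner_Integration.integrable_bound[OF integrable_mult_right[OF integrable_levy, of C]])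
  show "AE x in lborel. norm (w x * \<rho> x) \<le> norm (C * (min (x\<^sup>2) 1 * \<rho> x))"
    using AE_density_nonneg
  proof eventually_elim
    case (elim x)
    then have "\<bar>w x * \<rho> x\<bar> \<le> C * min (x\<^sup>2) 1 * \<rho> x"
      using assms(2)[of x] by (simp add: abs_mult mult_right_mono)
    then show ?case
      by (simp add: mult.assoc)
  qed
qed (use assms(1) in simp)

lemma integrable_psi: "integrable lborel (\<lambda>x. (1 - cos (t * x)) * \<rho> x)"
  by (rule integrable_weighted[OF _ one_minus_cos_le_min]) simp

lemma integrable_h:
  assumes "0 < r"
  shows "integrable lborel (\<lambda>x. min 1 (x\<^sup>2 / r\<^sup>2) * \<rho> x)"
proof (rule integrable_weighted[where C = "max 1 (1 / r\<^sup>2)"])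
  fix x :: real
  have "min 1 (x\<^sup>2 / r\<^sup>2) \<le> max 1 (1 / r\<^sup>2) * x\<^sup>2"
    using mult_right_mono[of "1 / r\<^sup>2" "max 1 (1 / r\<^sup>2)" "x\<^sup>2"] by (simp add: min.coboundedI2)
  then show "\<bar>min 1 (x\<^sup>2 / r\<^sup>2)\<bar> \<le> max 1 (1 / r\<^sup>2) * min (x\<^sup>2) 1"
    by (auto simp: min_def)
qed simp

lemma integrable_K:
  assumes "0 < r"
  shows "integrable lborel (\<lambda>x. indicator {x. \<bar>x\<bar> \<le> r} x * (x\<^sup>2 / r\<^sup>2) * \<rho> x)"
proof (rule integrable_weighted[where C = "max 1 (1 / r\<^sup>2)"])
  fix x :: real
  have "x\<^sup>2 / r\<^sup>2 \<le> max 1 (1 / r\<^sup>2) * x\<^sup>2"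
    using mult_right_mono[of "1 / r\<^sup>2" "max 1 (1 / r\<^sup>2)" "x\<^sup>2"] by simp
  moreover have "x\<^sup>2 / r\<^sup>2 \<le> 1" if "\<bar>x\<bar> \<le> r"
    using that min_one_sq_div_sq[OF assms, of x] min.cobounded1[of 1 "x\<^sup>2 / r\<^sup>2"] by simp
  ultimately show "\<bar>indicator {x. \<bar>x\<bar> \<le> r} x * (x\<^sup>2 / r\<^sup>2)\<bar> \<le> max 1 (1 / r\<^sup>2) * min (x\<^sup>2) 1"
    by (auto simp: min_def indicator_def)
qed simp

lemma psi_nonneg: "0 \<le> levy_psi \<rho> t"
  unfolding levy_psi_def
  by (rule integral_nonneg_AE) (use AE_density_nonneg in \<open>eventually_elim, simp\<close>)

lemma h_nonneg: "0 \<le> levy_h \<rho> r"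
  unfolding levy_h_def
  by (rule integral_nonneg_AE) (use AE_density_nonneg in \<open>eventually_elim, simp\<close>)

lemma K_nonneg: "0 \<le> levy_K \<rho> r"
  unfolding levy_K_eq_integral
  by (rule integral_nonneg_AE) (use AE_density_nonneg in \<open>eventually_elim, simp\<close>)

lemma K_le_h:
  assumes "0 < r"
  shows "levy_K \<rho> r \<le> levy_h \<rho> r"
  unfolding levy_K_eq_integral levy_h_def
proof (rule integral_mono_AE[OF integrable_K[OF assms] integrable_h[OF assms]])
  show "AE x in lborel. indicator {x. \<bar>x\<bar> \<le> r} x * (x\<^sup>2 / r\<^sup>2) * \<rho> x \<le> min 1 (x\<^sup>2 / r\<^sup>2) * \<rho> x"
    using AE_density_nonneg
    by eventually_elim (simp add: min_one_sq_div_sq[OF assms])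
qed

lemma h_antimono:
  assumes "0 < r" "r \<le> r'"
  shows "levy_h \<rho> r' \<le> levy_h \<rho> r"
  unfolding levy_h_def
proof (rule integral_mono_AE[OF integrable_h integrable_h[OF assms(1)]])
  show "0 < r'"
    using assms by simp
  have weight_le: "x\<^sup>2 / r'\<^sup>2 \<le> x\<^sup>2 / r\<^sup>2" for x :: real
    using assms by (intro divide_left_mono power_mono) auto
  show "AE x in lborel. min 1 (x\<^sup>2 / r'\<^sup>2) * \<rho> x \<le> min 1 (x\<^sup>2 / r\<^sup>2) * \<rho> x"
    using AE_density_nonneg
    by eventually_elim (use weight_le in \<open>auto intro: mult_right_mono min.mono\<close>)
qed

lemma sq_mult_K_mono:
  assumes "0 < r" "r \<le> r'"
  shows "r\<^sup>2 * levy_K \<rho> r \<le> r'\<^sup>2 * levy_K \<rho> r'"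
proof -
  have "0 < r'"
    using assms by simp
  have "r\<^sup>2 * levy_K \<rho> r = (LINT x|lborel. r\<^sup>2 * (indicator {x. \<bar>x\<bar> \<le> r} x * (x\<^sup>2 / r\<^sup>2) * \<rho> x))"
    unfolding levy_K_eq_integral by (simp add: mult.assoc)
  also have "\<dots> \<le> (LINT x|lborel. r'\<^sup>2 * (indicator {x. \<bar>x\<bar> \<le> r'} x * (x\<^sup>2 / r'\<^sup>2) * \<rho> x))"
  proof (rule integral_mono_AE)
    show "integrable lborel (\<lambda>x. r\<^sup>2 * (indicator {x. \<bar>x\<bar> \<le> r} x * (x\<^sup>2 / r\<^sup>2) * \<rho> x))"
      "integrable lborel (\<lambda>x. r'\<^sup>2 * (indicator {x. \<bar>x\<bar> \<le> r'} x * (x\<^sup>2 / r'\<^sup>2) * \<rho> x))"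
      by (intro integrable_mult_right integrable_K; use assms \<open>0 < r'\<close> in simp)+
    show "AE x in lborel. r\<^sup>2 * (indicator {x. \<bar>x\<bar> \<le> r} x * (x\<^sup>2 / r\<^sup>2) * \<rho> x)
        \<le> r'\<^sup>2 * (indicator {x. \<bar>x\<bar> \<le> r'} x * (x\<^sup>2 / r'\<^sup>2) * \<rho> x)"
      using AE_density_nonneg by eventually_elim (use assms \<open>0 < r'\<close> in \<open>auto simp: indicator_def\<close>)
  qed
  also have "\<dots> = r'\<^sup>2 * levy_K \<rho> r'"
    unfolding levy_K_eq_integral by (simp add: mult.assoc)
  finally show ?thesis .
qed

lemma psi_le_K_h:
  assumes "0 < s"
  shows "levy_psi \<rho> (L / s) \<le> L\<^sup>2 / 2 * levy_K \<rho> s + 2 * levy_h \<rho> s"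
proof -
  have "levy_psi \<rho> (L / s) \<le> (LINT x|lborel. L\<^sup>2 / 2 * (indicator {x. \<bar>x\<bar> \<le> s} x * (x\<^sup>2 / s\<^sup>2) * \<rho> x)
      + 2 * (min 1 (x\<^sup>2 / s\<^sup>2) * \<rho> x))"
    unfolding levy_psi_def
  proof (rule integral_mono_AE[OF integrable_psi])
    show "integrable lborel (\<lambda>x. L\<^sup>2 / 2 * (indicator {x. \<bar>x\<bar> \<le> s} x * (x\<^sup>2 / s\<^sup>2) * \<rho> x)
        + 2 * (min 1 (x\<^sup>2 / s\<^sup>2) * \<rho> x))"
      by (intro Bochner_Integration.integrable_add integrable_mult_right integrable_K integrable_h assms)
    show "AE x in lborel. (1 - cos (L / s * x)) * \<rho> x \<le> L\<^sup>2 / 2 * (indicator {x. \<bar>x\<bar> \<le> s} x * (x\<^sup>2 / s\<^sup>2) * \<rho> x)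
        + 2 * (min 1 (x\<^sup>2 / s\<^sup>2) * \<rho> x)"
      using AE_density_nonneg
    proof eventually_elim
      case (elim x)
      then show ?case
        using mult_right_mono[OF one_minus_cos_le_weights[OF assms, of L x] elim]
        by (simp add: algebra_simps)
    qed
  qed
  also have "\<dots> = L\<^sup>2 / 2 * levy_K \<rho> s + 2 * levy_h \<rho> s"
    unfolding levy_K_eq_integral levy_h_def
    by (simp only: Bochner_Integration.integral_add integrable_mult_right integrable_K integrable_h assms
        integral_mult_right_zero)
  finally show ?thesis .
qed

lemma nn_integral_psi:
  "(\<integral>\<^sup>+x. ennreal (1 - cos (t * x)) * ennreal (\<rho> x) \<partial>lborel) = ennreal (levy_psi \<rho> t)"
proof -
  have "(\<integral>\<^sup>+x. ennreal (1 - cos (t * x)) * ennreal (\<rho> x) \<partial>lborel)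
      = (\<integral>\<^sup>+x. ennreal ((1 - cos (t * x)) * \<rho> x) \<partial>lborel)"
    by (rule nn_integral_cong) (simp add: ennreal_mult')
  also have "\<dots> = ennreal (levy_psi \<rho> t)"
    unfolding levy_psi_def
    by (rule nn_integral_eq_integral[OF integrable_psi])
      (use AE_density_nonneg in \<open>eventually_elim, simp\<close>)
  finally show ?thesis .
qed

lemma nn_integral_psi_interval:
  assumes "0 \<le> a"
  shows "(\<integral>\<^sup>+t. ennreal (levy_psi \<rho> t) * indicator {0..a} t \<partial>lborel)
    = (\<integral>\<^sup>+x. ennreal (a - sin (a * x) / x) * ennreal (\<rho> x) \<partial>lborel)"
proof -
  have psi_t: "ennreal (levy_psi \<rho> t) * indicator {0..a} t
      = (\<integral>\<^sup>+x. ennreal (1 - cos (t * x)) * ennreal (\<rho> x) * indicator {0..a} t \<partial>lborel)" for t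
    by (subst nn_integral_multc) (measurable, simp only: nn_integral_psi)
  have inner: "(\<integral>\<^sup>+t. ennreal (1 - cos (t * x)) * ennreal (\<rho> x) * indicator {0..a} t \<partial>lborel)
      = ennreal (a - sin (a * x) / x) * ennreal (\<rho> x)" if "x \<noteq> 0" for x
  proof -
    have "(\<integral>\<^sup>+t. ennreal (1 - cos (t * x)) * ennreal (\<rho> x) * indicator {0..a} t \<partial>lborel)
        = (\<integral>\<^sup>+t. ennreal (1 - cos (t * x)) * indicator {0..a} t \<partial>lborel) * ennreal (\<rho> x)"
      by (subst nn_integral_multc[symmetric]) (measurable, simp add: mult_ac)
    then show ?thesis
      using nn_integral_one_minus_cos_interval[OF that assms] by simp
  qed
  have "(\<integral>\<^sup>+t. ennreal (levy_psi \<rho> t) * indicator {0..a} t \<partial>lborel)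
      = (\<integral>\<^sup>+t. \<integral>\<^sup>+x. ennreal (1 - cos (t * x)) * ennreal (\<rho> x) * indicator {0..a} t \<partial>lborel \<partial>lborel)"
    by (simp only: psi_t)
  also have "\<dots> = (\<integral>\<^sup>+x. \<integral>\<^sup>+t. ennreal (1 - cos (t * x)) * ennreal (\<rho> x) * indicator {0..a} t \<partial>lborel \<partial>lborel)"
    by (rule lborel_pair.Fubini') measurable
  also have "\<dots> = (\<integral>\<^sup>+x. ennreal (a - sin (a * x) / x) * ennreal (\<rho> x) \<partial>lborel)"
    by (intro nn_integral_cong_AE eventually_mono[OF AE_lborel_singleton[of 0] inner])
  finally show ?thesis .
qed

lemma h_le_psi_average:
  assumes "0 < s"
  shows "ennreal (13/100 * levy_h \<rho> s)
    \<le> ennreal s * (\<integral>\<^sup>+t. ennreal (levy_psi \<rho> t) * indicator {0..1/s} t \<partial>lborel)"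
proof -
  define a where "a = 1 / s"
  have sinc_le: "13/100 * min 1 (x\<^sup>2 / s\<^sup>2) \<le> s * (a - sin (a * x) / x)" if "x \<noteq> 0" for x
  proof -
    have "(a * x)\<^sup>2 = x\<^sup>2 / s\<^sup>2"
      by (simp add: a_def power_divide)
    moreover have "s * (a - sin (a * x) / x) = 1 - sin (a * x) / (a * x)"
      unfolding a_def using assms that by (simp add: field_simps)
    ultimately show ?thesis
      using one_minus_sinc_ge[of "a * x"] that assms by (simp add: a_def)
  qed
  have weight_le: "ennreal (13/100 * min 1 (x\<^sup>2 / s\<^sup>2)) * ennreal (\<rho> x)
      \<le> ennreal s * (ennreal (a - sin (a * x) / x) * ennreal (\<rho> x))" if "x \<noteq> 0" for x
  proof -
    have "ennreal (13/100 * min 1 (x\<^sup>2 / s\<^sup>2)) \<le> ennreal s * ennreal (a - sin (a * x) / x)"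
      using ennreal_leI[OF sinc_le[OF that]] assms by (simp add: ennreal_mult')
    then show ?thesis
      by (simp add: mult.assoc[symmetric] mult_right_mono)
  qed
  have "ennreal (13/100 * levy_h \<rho> s) = (\<integral>\<^sup>+x. ennreal (13/100 * (min 1 (x\<^sup>2 / s\<^sup>2) * \<rho> x)) \<partial>lborel)"
    unfolding levy_h_def integral_mult_right_zero[symmetric]
    by (rule nn_integral_eq_integral[OF integrable_mult_right[OF integrable_h[OF assms]], symmetric])
      (use AE_density_nonneg in \<open>eventually_elim, simp\<close>)
  also have "\<dots> = (\<integral>\<^sup>+x. ennreal (13/100 * min 1 (x\<^sup>2 / s\<^sup>2)) * ennreal (\<rho> x) \<partial>lborel)"
    by (rule nn_integral_cong) (subst ennreal_mult'[symmetric]; simp add: mult.assoc)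
  also have "\<dots> \<le> (\<integral>\<^sup>+x. ennreal s * (ennreal (a - sin (a * x) / x) * ennreal (\<rho> x)) \<partial>lborel)"
    by (intro nn_integral_mono_AE eventually_mono[OF AE_lborel_singleton[of 0] weight_le])
  also have "\<dots> = ennreal s * (\<integral>\<^sup>+t. ennreal (levy_psi \<rho> t) * indicator {0..a} t \<partial>lborel)"
    using assms by (simp add: a_def nn_integral_cmult nn_integral_psi_interval)
  finally show ?thesis
    by (simp add: a_def)
qed

lemma h_le_of_psi_le:
  assumes "0 < s" and psi_le: "\<And>t. 0 \<le> t \<Longrightarrow> t \<le> 1 / s \<Longrightarrow> levy_psi \<rho> t \<le> B"
  shows "13/100 * levy_h \<rho> s \<le> B"
proof -
  have "0 \<le> B"
    using psi_le[of 0] assms by (simp add: levy_psi_def)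
  have "ennreal (13/100 * levy_h \<rho> s)
      \<le> ennreal s * (\<integral>\<^sup>+t. ennreal (levy_psi \<rho> t) * indicator {0..1/s} t \<partial>lborel)"
    using assms(1) by (rule h_le_psi_average)
  also have "\<dots> \<le> ennreal s * (\<integral>\<^sup>+t. ennreal B * indicator {0..1/s} t \<partial>lborel)"
    using psi_le by (intro mult_left_mono nn_integral_mono) (auto simp: indicator_def ennreal_leI)
  also have "\<dots> = ennreal B"
    using assms(1) \<open>0 \<le> B\<close> by (simp add: nn_integral_cmult_indicator ennreal_mult'[symmetric])
  finally show ?thesis
    using \<open>0 \<le> B\<close> by simp
qed

lemma AE_density_zero_if_psi_zero:
  assumes "\<And>t. 0 \<le> t \<Longrightarrow> levy_psi \<rho> t = 0"
  shows "AE x in lborel. \<rho> x = 0"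
proof -
  have "13/100 * levy_h \<rho> 1 \<le> 0"
    by (rule h_le_of_psi_le) (simp_all add: assms)
  then have "(LINT x|lborel. min 1 (x\<^sup>2) * \<rho> x) = 0"
    using h_nonneg[of 1] unfolding levy_h_def by simp
  moreover have "integrable lborel (\<lambda>x. min 1 (x\<^sup>2) * \<rho> x)"
    using integrable_h[of 1] by simp
  moreover have "AE x in lborel. 0 \<le> min 1 (x\<^sup>2) * \<rho> x"
    using AE_density_nonneg by eventually_elim simp
  ultimately have "AE x in lborel. min 1 (x\<^sup>2) * \<rho> x = 0"
    by (simp add: integral_nonneg_eq_0_iff_AE)
  then show ?thesis
    using AE_lborel_singleton[of 0] by eventually_elim (auto simp: min_def split: if_splits)
qed

lemma lower_scaling_const_le_1:
  assumes nonzero: "(\<integral>\<^sup>+x. ennreal (\<rho> x) \<partial>lborel) \<noteq> 0"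
    and lower_scaling: "\<And>lam \<theta>. 1 \<le> lam \<Longrightarrow> 0 \<le> \<theta> \<Longrightarrow> Cl * lam powr \<alpha> * levy_psi \<rho> \<theta> \<le> levy_psi \<rho> (lam * \<theta>)"
  shows "Cl \<le> 1"
proof (rule ccontr)
  assume "\<not> Cl \<le> 1"
  have "levy_psi \<rho> t = 0" if "0 \<le> t" for t
  proof -
    have "Cl * levy_psi \<rho> t \<le> levy_psi \<rho> t"
      using lower_scaling[of 1 t] that by simp
    then show ?thesis
      using \<open>\<not> Cl \<le> 1\<close> psi_nonneg[of t] mult_le_cancel_right1[of "levy_psi \<rho> t" Cl] by auto
  qed
  then have "AE x in lborel. ennreal (\<rho> x) = 0"
    using AE_density_zero_if_psi_zero by (auto elim: eventually_mono)
  then show False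
    using nonzero by (simp add: nn_integral_0_iff_AE)
qed

lemma psi_le_of_lower_scaling:
  assumes lower_scaling: "\<And>lam \<theta>. 1 \<le> lam \<Longrightarrow> 0 \<le> \<theta> \<Longrightarrow> Cl * lam powr \<alpha> * levy_psi \<rho> \<theta> \<le> levy_psi \<rho> (lam * \<theta>)"
    and "0 < \<alpha>" "0 < Cl" "1 \<le> L" "0 < s" "0 \<le> t" "t \<le> 1 / s"
  shows "Cl * L powr \<alpha> * levy_psi \<rho> t \<le> levy_psi \<rho> (L / s)"
proof (cases "t = 0")
  case True
  then show ?thesis
    using psi_nonneg[of "L / s"] by (simp add: levy_psi_def)
next
  case False
  define lam where "lam = L / (s * t)"
  have "L \<le> lam"
    using assms False by (simp add: lam_def field_simps mult_left_le)
  then have "Cl * L powr \<alpha> * levy_psi \<rho> t \<le> Cl * lam powr \<alpha> * levy_psi \<rho> t"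
    using assms psi_nonneg[of t] by (intro mult_right_mono mult_left_mono powr_mono2) auto
  also have "\<dots> \<le> levy_psi \<rho> (lam * t)"
    using lower_scaling \<open>L \<le> lam\<close> assms by simp
  also have "lam * t = L / s"
    using assms False by (simp add: lam_def)
  finally show ?thesis .
qed

lemma h_le_K_of_lower_scaling:
  assumes lower_scaling: "\<And>lam \<theta>. 1 \<le> lam \<Longrightarrow> 0 \<le> \<theta> \<Longrightarrow> Cl * lam powr \<alpha> * levy_psi \<rho> \<theta> \<le> levy_psi \<rho> (lam * \<theta>)"
    and "0 < \<alpha>" "0 < Cl" "Cl \<le> 1" "0 < s"
  shows "levy_h \<rho> s \<le> (2 / (Cl / pi\<^sup>2)) powr (2 / \<alpha>) * levy_K \<rho> s"
proof -
  define X where "X = 2 / (Cl / pi\<^sup>2)"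
  define L where "L = X powr (1 / \<alpha>)"
  have "1 \<le> X"
    using assms pi_ge_two power_mono[OF pi_ge_two, of 2] by (simp add: X_def field_simps)
  then have "1 \<le> L" "L powr \<alpha> = X" "L\<^sup>2 = X powr (2 / \<alpha>)"
    using assms by (simp_all add: L_def ge_one_powr_ge_zero powr_powr flip: powr_realpow)
  have "levy_psi \<rho> t \<le> levy_psi \<rho> (L / s) / (Cl * X)" if "0 \<le> t" "t \<le> 1 / s" for t
    using psi_le_of_lower_scaling[OF lower_scaling assms(2,3) \<open>1 \<le> L\<close> assms(5) that]
      \<open>L powr \<alpha> = X\<close> \<open>0 < Cl\<close> \<open>1 \<le> X\<close> by (simp add: field_simps)
  then have "13/100 * levy_h \<rho> s \<le> levy_psi \<rho> (L / s) / (Cl * X)"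
    using assms(5) by (rule h_le_of_psi_le[rotated])
  then have "13/100 * (2 * pi\<^sup>2) * levy_h \<rho> s \<le> L\<^sup>2 / 2 * levy_K \<rho> s + 2 * levy_h \<rho> s"
    using psi_le_K_h[OF \<open>0 < s\<close>, of L] assms by (simp add: X_def field_simps)
  moreover have "5/2 \<le> 13/100 * (2 * pi\<^sup>2)"
  proof -
    have "3.14 \<le> pi"
      using pi_approx by simp
    then show ?thesis
      using mult_mono[of "3.14" pi "3.14" pi] by (simp add: power2_eq_square)
  qed
  then have "5/2 * levy_h \<rho> s \<le> 13/100 * (2 * pi\<^sup>2) * levy_h \<rho> s"
    using h_nonneg by (rule mult_right_mono)
  ultimately have "levy_h \<rho> s \<le> L\<^sup>2 * levy_K \<rho> s"
    by linarith
  then show ?thesis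
    using \<open>L\<^sup>2 = X powr (2 / \<alpha>)\<close> by (simp add: X_def)
qed

end

section \<open>Truncated densities\<close>

lemma borel_measurable_even_continuous_on_pos:
  fixes f :: "real \<Rightarrow> real"
  assumes "continuous_on {0<..} f" and even: "\<And>x. x \<noteq> 0 \<Longrightarrow> f (- x) = f x"
  shows "f \<in> borel_measurable borel"
proof -
  define g where "g x = indicator {0<..} x *\<^sub>R f x" for x :: real
  have [measurable]: "g \<in> borel_measurable borel"
    unfolding g_def by (rule borel_measurable_continuous_on_indicator) (simp_all add: assms(1))
  have "f = (\<lambda>x. if x = 0 then f 0 else g \<bar>x\<bar>)"
    using even by (auto simp: g_def abs_if)
  also have "\<dots> \<in> borel_measurable borel"
    by measurable
  finally show ?thesis .
qed

locale levy_truncation = levy_density \<nu> for \<nu> :: "real \<Rightarrow> real" +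
  fixes m :: "real \<Rightarrow> real" and \<delta> :: real
  assumes delta_pos: "0 < \<delta>"
    and borel_measurable_truncation [measurable]: "m \<in> borel_measurable borel"
    and truncation_bounds: "\<And>x. x \<noteq> 0 \<Longrightarrow> 0 \<le> m x \<and> m x \<le> \<nu> x"
    and truncation_eq: "\<And>x. x \<noteq> 0 \<Longrightarrow> \<bar>x\<bar> \<le> \<delta> \<Longrightarrow> m x = \<nu> x"
    and truncation_zero: "\<And>x. 2 * \<delta> \<le> \<bar>x\<bar> \<Longrightarrow> m x = 0"
begin

sublocale truncation: levy_density m
proof
  show "AE x in lborel. 0 \<le> m x"
    using AE_lborel_singleton[of 0] by eventually_elim (simp add: truncation_bounds)
  show "integrable lborel (\<lambda>x. min (x\<^sup>2) 1 * m x)"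
  proof (rule Bochner_Integration.integrable_bound[OF integrable_levy])
    show "AE x in lborel. norm (min (x\<^sup>2) 1 * m x) \<le> norm (min (x\<^sup>2) 1 * \<nu> x)"
      using AE_lborel_singleton[of 0]
      by eventually_elim (auto simp: abs_mult dest: truncation_bounds intro!: mult_left_mono)
  qed simp
qed simp

lemma h_truncation_le:
  assumes "0 < r"
  shows "levy_h m r \<le> levy_h \<nu> r"
  unfolding levy_h_def
proof (rule integral_mono_AE[OF truncation.integrable_h[OF assms] integrable_h[OF assms]])
  show "AE x in lborel. min 1 (x\<^sup>2 / r\<^sup>2) * m x \<le> min 1 (x\<^sup>2 / r\<^sup>2) * \<nu> x"
    using AE_lborel_singleton[of 0]
    by eventually_elim (simp add: truncation_bounds mult_left_mono)
qed

lemma K_truncation_eq: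
  assumes "r \<le> \<delta>"
  shows "levy_K m r = levy_K \<nu> r"
  unfolding levy_K_eq_integral
  using AE_lborel_singleton[of 0] assms
  by (intro integral_cong_AE) (auto simp: truncation_eq indicator_def)

lemma h_truncation_eq_K:
  assumes "2 * \<delta> \<le> r"
  shows "levy_h m r = levy_K m r"
  unfolding levy_h_def levy_K_eq_integral
proof (rule Bochner_Integration.integral_cong[OF refl])
  fix x :: real
  show "min 1 (x\<^sup>2 / r\<^sup>2) * m x = indicator {x. \<bar>x\<bar> \<le> r} x * (x\<^sup>2 / r\<^sup>2) * m x"
    using assms delta_pos truncation_zero[of x] by (simp add: min_one_sq_div_sq)
qed

lemma h_le_K_truncation:
  assumes key: "\<And>s. 0 < s \<Longrightarrow> levy_h \<nu> s \<le> c * levy_K \<nu> s" and "0 \<le> c" "0 < r"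
  shows "levy_h \<nu> r \<le> c * (max (r\<^sup>2) (\<delta>\<^sup>2) / \<delta>\<^sup>2) * levy_K m r"
proof (cases "r \<le> \<delta>")
  case True
  then have "max (r\<^sup>2) (\<delta>\<^sup>2) = \<delta>\<^sup>2"
    using assms by (simp add: power_mono)
  then show ?thesis
    using key[OF \<open>0 < r\<close>] K_truncation_eq[OF True] delta_pos by simp
next
  case False
  then have "max (r\<^sup>2) (\<delta>\<^sup>2) = r\<^sup>2"
    using delta_pos by (simp add: power_mono)
  have "levy_h \<nu> r \<le> levy_h \<nu> \<delta>"
    using False delta_pos by (intro h_antimono) auto
  also have "\<dots> \<le> c * levy_K m \<delta>"
    using key[OF delta_pos] K_truncation_eq[of \<delta>] by simp
  also have "\<dots> \<le> c * (r\<^sup>2 / \<delta>\<^sup>2 * levy_K m r)"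
    using truncation.sq_mult_K_mono[OF delta_pos, of r] False delta_pos \<open>0 \<le> c\<close>
    by (intro mult_left_mono) (simp_all add: field_simps)
  finally show ?thesis
    using \<open>max (r\<^sup>2) (\<delta>\<^sup>2) = r\<^sup>2\<close> by (simp add: mult.assoc)
qed

lemma truncation_estimates:
  assumes key: "\<And>s. 0 < s \<Longrightarrow> levy_h \<nu> s \<le> c * levy_K \<nu> s" and "1 \<le> c" "0 < r"
  defines "M \<equiv> max (r\<^sup>2) (\<delta>\<^sup>2) / \<delta>\<^sup>2"
  shows "levy_K \<nu> r \<le> c * M * levy_K m r
    \<and> levy_h m r \<le> levy_h \<nu> r
    \<and> levy_h \<nu> r \<le> c\<^sup>2 * M * levy_K m r
    \<and> levy_h m r \<le> 4 * c\<^sup>2 * levy_K m r"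
proof -
  have h_le: "levy_h \<nu> r \<le> c * M * levy_K m r"
    unfolding M_def using key assms by (intro h_le_K_truncation) auto
  have "0 \<le> M"
    unfolding M_def by (intro divide_nonneg_nonneg) (auto simp: le_max_iff_disj)
  then have "c * M * levy_K m r \<le> c\<^sup>2 * M * levy_K m r"
    using \<open>1 \<le> c\<close> truncation.K_nonneg[of r]
    by (intro mult_right_mono) (auto simp: power2_eq_square)
  with h_le have h_le_sq: "levy_h \<nu> r \<le> c\<^sup>2 * M * levy_K m r"
    by linarith
  have "levy_h m r \<le> 4 * c\<^sup>2 * levy_K m r"
  proof (cases "r \<le> 2 * \<delta>")
    case True
    then have "M \<le> 4"
      using delta_pos \<open>0 < r\<close> power_mono[OF True, of 2] by (simp add: M_def field_simps)
    then have "c\<^sup>2 * M \<le> c\<^sup>2 * 4"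
      by (intro mult_left_mono) auto
    then have "c\<^sup>2 * M * levy_K m r \<le> 4 * c\<^sup>2 * levy_K m r"
      using truncation.K_nonneg[of r] by (intro mult_right_mono) (simp_all add: mult.commute)
    then show ?thesis
      using h_truncation_le[OF \<open>0 < r\<close>] h_le_sq by linarith
  next
    case False
    have "1 \<le> 4 * c\<^sup>2"
      using \<open>1 \<le> c\<close> one_le_power[of c 2] by linarith
    then show ?thesis
      using h_truncation_eq_K[of r] False truncation.K_nonneg[of r]
      by (simp add: mult_le_cancel_right1)
  qed
  then show ?thesis
    using h_le h_le_sq K_le_h[OF \<open>0 < r\<close>] h_truncation_le[OF \<open>0 < r\<close>] by linarith
qed

end

lemma levy_truncation_even_extension:
  assumes "levy_density \<nu>" and "0 < \<delta>"
    and nu_nonneg: "\<And>x. x \<noteq> 0 \<Longrightarrow> 0 \<le> \<nu> x"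
    and nu_even: "\<And>x. x \<noteq> 0 \<Longrightarrow> \<nu> (- x) = \<nu> x"
    and m_eq: "\<And>x. x \<in> {0<..\<delta>} \<Longrightarrow> m x = \<nu> x"
    and m_mid: "\<And>x. x \<in> {\<delta><..<2*\<delta>} \<Longrightarrow> 0 \<le> m x \<and> m x \<le> \<nu> x"
    and m_zero: "\<And>x. x \<ge> 2*\<delta> \<Longrightarrow> m x = 0"
    and m_cont: "continuous_on {0<..} m"
    and m_even: "\<And>x. x \<noteq> 0 \<Longrightarrow> m (- x) = m x"
  shows "levy_truncation \<nu> m \<delta>"
proof -
  have abs_eq: "m x = m \<bar>x\<bar>" "\<nu> x = \<nu> \<bar>x\<bar>" if "x \<noteq> 0" for x
    using m_even[OF that] nu_even[OF that] by (auto simp: abs_if)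
  have pos: "(0 \<le> m x \<and> m x \<le> \<nu> x) \<and> (x \<le> \<delta> \<longrightarrow> m x = \<nu> x) \<and> (2 * \<delta> \<le> x \<longrightarrow> m x = 0)"
    if "0 < x" for x
    using m_eq[of x] m_mid[of x] m_zero[of x] nu_nonneg[of x] that by force
  show ?thesis
  proof (unfold_locales)
    show "m \<in> borel_measurable borel"
      using m_cont m_even by (rule borel_measurable_even_continuous_on_pos)
    show "0 \<le> m x \<and> m x \<le> \<nu> x" if "x \<noteq> 0" for x
      using pos[of "\<bar>x\<bar>"] abs_eq[OF that, symmetric] that by simp
    show "m x = \<nu> x" if "x \<noteq> 0" "\<bar>x\<bar> \<le> \<delta>" for x
      using pos[of "\<bar>x\<bar>"] abs_eq[OF that(1), symmetric] that by simp
    show "m x = 0" if "2 * \<delta> \<le> \<bar>x\<bar>" for x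
    proof -
      have "x \<noteq> 0"
        using that \<open>0 < \<delta>\<close> by auto
      then show ?thesis
        using pos[of "\<bar>x\<bar>"] abs_eq[OF \<open>x \<noteq> 0\<close>, symmetric] that by simp
    qed
  qed (use assms(1,2) in \<open>simp_all add: levy_density_def\<close>)
qed

theorem lemma2p1:
  fixes \<nu> \<nu>' :: "real \<Rightarrow> real"
    and \<mu> \<mu>' :: "real \<Rightarrow> real \<Rightarrow> real"
    and \<alpha> \<beta> Cl Cu \<eta>4 \<delta>0 :: real
  assumes nu_meas: "\<nu> \<in> borel_measurable borel"
    and nu_nonneg: "\<And>x. x \<noteq> 0 \<Longrightarrow> \<nu> x \<ge> 0"
    and nu_sym: "\<And>x. x \<noteq> 0 \<Longrightarrow> \<nu> (-x) = \<nu> x"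
    and nu_levy: "integrable lborel (\<lambda>x. min (x\<^sup>2) 1 * \<nu> x)"
    and nu_infinite: "(\<integral>\<^sup>+ x. ennreal (\<nu> x) \<partial>lborel) = \<infinity>"
    and eta4: "\<eta>4 > 0"
    and nu_C1: "\<And>x. x \<in> {0<..<\<eta>4} \<Longrightarrow> (\<nu> has_real_derivative \<nu>' x) (at x)"
    and nu'_cont: "continuous_on {0<..<\<eta>4} \<nu>'"
    and nu'_neg: "\<And>x. x \<in> {0<..<\<eta>4} \<Longrightarrow> \<nu>' x < 0"
    and nu'_mono: "\<And>x y. 0 < x \<Longrightarrow> x \<le> y \<Longrightarrow> y < \<eta>4 \<Longrightarrow> - \<nu>' y / y \<le> - \<nu>' x / x"
    and alpha_beta: "0 < \<alpha>" "\<alpha> \<le> \<beta>" "\<beta> < 2"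
    and Cl_pos: "Cl > 0" and Cu_pos: "Cu > 0"
    and lower_scaling: "\<And>lam \<theta>. lam \<ge> 1 \<Longrightarrow> \<theta> \<ge> 0 \<Longrightarrow>
        levy_psi \<nu> (lam * \<theta>) \<ge> Cl * lam powr \<alpha> * levy_psi \<nu> \<theta>"
    and upper_scaling: "\<And>lam \<theta>. lam \<ge> 1 \<Longrightarrow> \<theta> \<ge> 1 \<Longrightarrow>
        levy_psi \<nu> (lam * \<theta>) \<le> Cu * lam powr \<beta> * levy_psi \<nu> \<theta>"
    and delta0: "0 < \<delta>0" "\<delta>0 \<le> 1/24"
    and mu_eq: "\<And>\<delta> x. 0 < \<delta> \<Longrightarrow> \<delta> \<le> \<delta>0 \<Longrightarrow> x \<in> {0<..\<delta>} \<Longrightarrow> \<mu> \<delta> x = \<nu> x"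
    and mu_mid: "\<And>\<delta> x. 0 < \<delta> \<Longrightarrow> \<delta> \<le> \<delta>0 \<Longrightarrow> x \<in> {\<delta><..<2*\<delta>} \<Longrightarrow>
        0 \<le> \<mu> \<delta> x \<and> \<mu> \<delta> x \<le> \<nu> x"
    and mu_zero: "\<And>\<delta> x. 0 < \<delta> \<Longrightarrow> \<delta> \<le> \<delta>0 \<Longrightarrow> x \<ge> 2*\<delta> \<Longrightarrow> \<mu> \<delta> x = 0"
    and mu_C1: "\<And>\<delta> x. 0 < \<delta> \<Longrightarrow> \<delta> \<le> \<delta>0 \<Longrightarrow> x > 0 \<Longrightarrow>
        (\<mu> \<delta> has_real_derivative \<mu>' \<delta> x) (at x)"
    and mu'_cont: "\<And>\<delta>. 0 < \<delta> \<Longrightarrow> \<delta> \<le> \<delta>0 \<Longrightarrow> continuous_on {0<..} (\<mu>' \<delta>)"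
    and mu'_nonpos: "\<And>\<delta> x. 0 < \<delta> \<Longrightarrow> \<delta> \<le> \<delta>0 \<Longrightarrow> x > 0 \<Longrightarrow> \<mu>' \<delta> x \<le> 0"
    and mu'_mono: "\<And>\<delta> x y. 0 < \<delta> \<Longrightarrow> \<delta> \<le> \<delta>0 \<Longrightarrow> 0 < x \<Longrightarrow> x \<le> y \<Longrightarrow>
        - \<mu>' \<delta> y / y \<le> - \<mu>' \<delta> x / x"
    and mu_sym: "\<And>\<delta> x. 0 < \<delta> \<Longrightarrow> \<delta> \<le> \<delta>0 \<Longrightarrow> x \<noteq> 0 \<Longrightarrow> \<mu> \<delta> (-x) = \<mu> \<delta> x"
    and delta: "0 < \<delta>" "\<delta> \<le> \<delta>0"
    and r_pos: "r > 0"
  shows "levy_K \<nu> r \<le> (2 / (Cl / pi\<^sup>2)) powr (2/\<alpha>) * (max (r\<^sup>2) (\<delta>\<^sup>2) / \<delta>\<^sup>2) * levy_K (\<mu> \<delta>) r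
     \<and> levy_h (\<mu> \<delta>) r \<le> levy_h \<nu> r
     \<and> levy_h \<nu> r \<le> (2 / (Cl / pi\<^sup>2)) powr (4/\<alpha>) * (max (r\<^sup>2) (\<delta>\<^sup>2) / \<delta>\<^sup>2) * levy_K (\<mu> \<delta>) r
     \<and> levy_h (\<mu> \<delta>) r \<le> 4 * (2 / (Cl / pi\<^sup>2)) powr (4/\<alpha>) * levy_K (\<mu> \<delta>) r"
proof -
  interpret \<nu>: levy_density \<nu>
  proof
    show "AE x in lborel. 0 \<le> \<nu> x"
      using AE_lborel_singleton[of 0] by eventually_elim (rule nu_nonneg)
  qed (fact nu_meas nu_levy)+
  have "Cl \<le> 1"
    using nu_infinite lower_scaling by (intro \<nu>.lower_scaling_const_le_1) simp_all
  define c where "c = (2 / (Cl / pi\<^sup>2)) powr (2 / \<alpha>)"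
  have key: "levy_h \<nu> s \<le> c * levy_K \<nu> s" if "0 < s" for s
    unfolding c_def using lower_scaling alpha_beta(1) Cl_pos \<open>Cl \<le> 1\<close> that
    by (rule \<nu>.h_le_K_of_lower_scaling)
  have "1 \<le> c"
    using \<open>Cl \<le> 1\<close> Cl_pos alpha_beta(1) pi_ge_two power_mono[OF pi_ge_two, of 2]
    by (simp add: c_def ge_one_powr_ge_zero field_simps)
  have "(2 / (Cl / pi\<^sup>2)) powr (4 / \<alpha>) = c\<^sup>2"
    by (simp add: c_def power2_eq_square flip: powr_add)
  interpret levy_truncation \<nu> "\<mu> \<delta>" \<delta>
  proof (rule levy_truncation_even_extension)
    show "continuous_on {0<..} (\<mu> \<delta>)"
      using mu_C1[OF delta] by (intro continuous_at_imp_continuous_on) (auto intro: DERIV_isCont)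
  qed (use \<nu>.levy_density_axioms delta nu_nonneg nu_sym mu_eq mu_mid mu_zero mu_sym in auto)
  show ?thesis
    using truncation_estimates[OF key \<open>1 \<le> c\<close> r_pos] \<open>_ = c\<^sup>2\<close> unfolding c_def by simp
qed

end
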